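(* Let the number of attacked inputs and outputs be bounded by $r$ and $s$, respectively. Under the attack model described in the context, the state of the system can be reconstructed (possibly with bounded delay) from the controller input $u$ and observed output $y$ if and only if the system $(A,B,C,D)$ is $(2r,2s)$-sparse strongly observable.
   Context: Consider the discrete-time LTI system $x(t+1)=Ax(t)+Bu_S(t)$, $y_S(t)=Cx(t)+Du_S(t)$ with $u_S(t)\in\mathbb{R}^m$, $x(t)\in\mathbb{R}^n$, $y_S(t)\in\mathbb{R}^p$, where $\begin{bmatrix}B^T & D^T\end{bmatrix}^T$ has full column rank. Attack model: $u_S(t)=u(t)+w(t)$ and $y(t)=y_S(t)+a(t)$, where $u(t)$ is the controller-designed input, $y(t)$ is the observed output, and $w(t)\in\mathbb{R}^m$, $a(t)\in\mathbb{R}^p$ are arbitrary signals injected by an adversary (no constraints on magnitude, statistics, or timing). The adversary chooses fixed (unknown to the controller) sets $\Gamma_u\subseteq\{1,\dots,m\}$ with $|\Gamma_u|\le r$ and $\overline{\Gamma}_y\subseteq\{1,\dots,p\}$ with $|\overline{\Gamma}_y|\le s$, such that for all $t$ the nonzero components of $w(t)$ lie in $\Gamma_u$ and the nonzero components of $a(t)$ lie in $\overline{\Gamma}_y$. The controller observes only $y(t)$ and knows $u(t)$. An LTI system is strongly observable if for any initial state $x(0)$ and any (unknown) input sequence there exists an integer $\tau$ such that $x(0)$ can be uniquely recovered from $y(0),\dots,y(\tau)$ (equivalently, $y(t)=0$ for all $t$ implies $x(0)=0$). An LTI system $(A,B,C,D)$ with $m$ inputs and $p$ outputs is $(r,s)$-sparse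 strongly observable if for every $\Gamma_u\subseteq\{1,\dots,m\}$ with $|\Gamma_u|\le r$ and every $\Gamma_y\subseteq\{1,\dots,p\}$ with $|\Gamma_y|\ge p-s$, the subsystem $(A, B|_{(\cdot,\Gamma_u)}, C|_{(\Gamma_y,\cdot)}, D|_{(\Gamma_y,\Gamma_u)})$ is strongly observable, where $M|_{(O_1,O_2)}$ denotes the submatrix of $M$ keeping rows indexed by $O_1$ and columns indexed by $O_2$ (a dot meaning all rows/columns). *)

theory Defs
  imports "HOL-Analysis.Analysis"
begin

primrec traj :: "real^'n^'n \<Rightarrow> real^'m^'n \<Rightarrow> real^'n \<Rightarrow> (nat \<Rightarrow> real^'m) \<Rightarrow> nat \<Rightarrow> real^'n"
  where
  "traj A B x0 v 0 = x0"
| "traj A B x0 v (Suc t) = A *v traj A B x0 v t + B *v v t"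

definition sys_out :: "real^'n^'n \<Rightarrow> real^'m^'n \<Rightarrow> real^'n^'p \<Rightarrow> real^'m^'p
    \<Rightarrow> real^'n \<Rightarrow> (nat \<Rightarrow> real^'m) \<Rightarrow> nat \<Rightarrow> real^'p" where
  "sys_out A B C D x0 v t = C *v traj A B x0 v t + D *v v t"

text \<open>Strong observability of the subsystem (A, B|(.,Iu), C|(Oy,.), D|(Oy,Iu)):
  an input of the subsystem is the same as an input of the full system supported on Iu,
  and its output consists of the components of the full output indexed by Oy.\<close>
definition strongly_observable_sub ::
  "real^'n^'n \<Rightarrow> real^'m^'n \<Rightarrow> real^'n^'p \<Rightarrow> real^'m^'p \<Rightarrow> 'm set \<Rightarrow> 'p set \<Rightarrow> bool" where
  "strongly_observable_sub A B C D Iu Oy \<longleftrightarrow>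
     (\<forall>x0 v. (\<forall>t i. i \<notin> Iu \<longrightarrow> v t $ i = 0) \<longrightarrow>
        (\<forall>t. \<forall>i\<in>Oy. sys_out A B C D x0 v t $ i = 0) \<longrightarrow> x0 = 0)"

definition sparse_strongly_observable ::
  "real^'n^'n \<Rightarrow> real^'m^'n \<Rightarrow> real^'n^'p \<Rightarrow> real^'m^'p \<Rightarrow> nat \<Rightarrow> nat \<Rightarrow> bool" where
  "sparse_strongly_observable A B C D r s \<longleftrightarrow>
     (\<forall>Gu Gy. card Gu \<le> r \<longrightarrow> card Gy \<ge> CARD('p) - s \<longrightarrow>
        strongly_observable_sub A B C D (Gu::'m set) (Gy::'p set))"

definition admissible_attack :: "nat \<Rightarrow> nat \<Rightarrow> (nat \<Rightarrow> real^'m) \<Rightarrow> (nat \<Rightarrow> real^'p) \<Rightarrow> bool" where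
  "admissible_attack r s w a \<longleftrightarrow>
     (\<exists>Gu Gyb. card (Gu::'m set) \<le> r \<and> card (Gyb::'p set) \<le> s \<and>
        (\<forall>t i. i \<notin> Gu \<longrightarrow> w t $ i = 0) \<and> (\<forall>t i. i \<notin> Gyb \<longrightarrow> a t $ i = 0))"

definition observed_out :: "real^'n^'n \<Rightarrow> real^'m^'n \<Rightarrow> real^'n^'p \<Rightarrow> real^'m^'p
    \<Rightarrow> real^'n \<Rightarrow> (nat \<Rightarrow> real^'m) \<Rightarrow> (nat \<Rightarrow> real^'m) \<Rightarrow> (nat \<Rightarrow> real^'p) \<Rightarrow> nat \<Rightarrow> real^'p" where
  "observed_out A B C D x0 u w a t = sys_out A B C D x0 (\<lambda>k. u k + w k) t + a t"

definition state_reconstructible ::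
  "real^'n^'n \<Rightarrow> real^'m^'n \<Rightarrow> real^'n^'p \<Rightarrow> real^'m^'p \<Rightarrow> nat \<Rightarrow> nat \<Rightarrow> bool" where
  "state_reconstructible A B C D r s \<longleftrightarrow>
     (\<exists>\<tau>::nat. \<forall>u x0 w a x0' w' a' t.
        admissible_attack r s w a \<longrightarrow> admissible_attack r s w' a' \<longrightarrow>
        (\<forall>k\<le>t+\<tau>. observed_out A B C D x0 u w a k = observed_out A B C D x0' u w' a' k) \<longrightarrow>
        traj A B x0 (\<lambda>k. u k + w k) t = traj A B x0' (\<lambda>k. u k + w' k) t)"

end

theory Submission
  imports Defs
begin

text \<open>Two runs of the attacked system produce the same observations exactly when their difference
  is a run of the unattacked system whose input is supported on the union of the two attacked
  input sets and whose output vanishes outside the union of the two attacked output sets; these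
  unions have at most 2r and 2s elements.  Conversely, a zero-output run of such a subsystem
  splits into two admissible attacks that the controller cannot tell apart, one started at x(0)
  and one at 0.  A bounded delay suffices because the states that admit a zero-output input for
  k steps form a decreasing chain of subspaces, which is stationary from k = n on; a state in
  the stationary subspace admits a zero-output input for all time.\<close>

lemma traj_add: "traj A B (x + y) (\<lambda>k. v k + w k) t = traj A B x v t + traj A B y w t"
  by (induct t) (simp_all add: matrix_vector_right_distrib algebra_simps)

lemma traj_scaleR: "traj A B (c *\<^sub>R x) (\<lambda>k. c *\<^sub>R v k) t = c *\<^sub>R traj A B x v t"
  by (induct t) (simp_all add: matrix_vector_mult_scaleR scaleR_right_distrib)

lemma traj_diff: "traj A B (x - y) (\<lambda>k. v k - w k) t = traj A B x v t - traj A B y w t"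
  by (induct t) (simp_all add: matrix_vector_mult_diff_distrib)

lemma traj_shift: "traj A B x v (t + k) = traj A B (traj A B x v t) (\<lambda>j. v (t + j)) k"
  by (induct k) simp_all

lemma traj_Suc_shift: "traj A B x v (Suc t) = traj A B (A *v x + B *v v 0) (\<lambda>j. v (Suc j)) t"
  using traj_shift[of A B x v 1 t] by simp

lemma sys_out_add:
  "sys_out A B C D (x + y) (\<lambda>k. v k + w k) t = sys_out A B C D x v t + sys_out A B C D y w t"
  by (simp add: sys_out_def traj_add matrix_vector_right_distrib algebra_simps)

lemma sys_out_scaleR:
  "sys_out A B C D (c *\<^sub>R x) (\<lambda>k. c *\<^sub>R v k) t = c *\<^sub>R sys_out A B C D x v t"
  by (simp add: sys_out_def traj_scaleR matrix_vector_mult_scaleR scaleR_right_distrib)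

lemma sys_out_diff:
  "sys_out A B C D (x - y) (\<lambda>k. v k - w k) t = sys_out A B C D x v t - sys_out A B C D y w t"
  by (simp add: sys_out_def traj_diff matrix_vector_mult_diff_distrib algebra_simps)

lemma sys_out_shift:
  "sys_out A B C D x v (t + k) = sys_out A B C D (traj A B x v t) (\<lambda>j. v (t + j)) k"
  by (simp add: sys_out_def traj_shift)

lemma sys_out_Suc_shift:
  "sys_out A B C D x v (Suc t) = sys_out A B C D (A *v x + B *v v 0) (\<lambda>j. v (Suc j)) t"
  unfolding sys_out_def by (subst traj_Suc_shift) (rule refl)

definition zero_output_states ::
  "real^'n^'n \<Rightarrow> real^'m^'n \<Rightarrow> real^'n^'p \<Rightarrow> real^'m^'p \<Rightarrow> 'm set \<Rightarrow> 'p set \<Rightarrow> nat \<Rightarrow> (real^'n) set"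
  where
  "zero_output_states A B C D Iu Oy k = {x. \<exists>v. (\<forall>t i. i \<notin> Iu \<longrightarrow> v t $ i = 0) \<and>
      (\<forall>t<k. \<forall>i\<in>Oy. sys_out A B C D x v t $ i = 0)}"

lemma subspace_zero_output_states: "subspace (zero_output_states A B C D Iu Oy k)"
  unfolding subspace_def
proof (intro conjI ballI allI)
  show "0 \<in> zero_output_states A B C D Iu Oy k"
    using sys_out_scaleR[of A B C D 0 0 "\<lambda>t. 0"]
    unfolding zero_output_states_def by (intro CollectI exI[of _ "\<lambda>t. 0"]) simp
next
  fix x y assume "x \<in> zero_output_states A B C D Iu Oy k" "y \<in> zero_output_states A B C D Iu Oy k"
  then obtain v w where "\<forall>t i. i \<notin> Iu \<longrightarrow> v t $ i = 0" "\<forall>t<k. \<forall>i\<in>Oy. sys_out A B C D x v t $ i = 0"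
    "\<forall>t i. i \<notin> Iu \<longrightarrow> w t $ i = 0" "\<forall>t<k. \<forall>i\<in>Oy. sys_out A B C D y w t $ i = 0"
    unfolding zero_output_states_def by blast
  then show "x + y \<in> zero_output_states A B C D Iu Oy k"
    unfolding zero_output_states_def by (intro CollectI exI[of _ "\<lambda>t. v t + w t"]) (simp add: sys_out_add)
next
  fix c x assume "x \<in> zero_output_states A B C D Iu Oy k"
  then obtain v where "\<forall>t i. i \<notin> Iu \<longrightarrow> v t $ i = 0" "\<forall>t<k. \<forall>i\<in>Oy. sys_out A B C D x v t $ i = 0"
    unfolding zero_output_states_def by blast
  then show "c *\<^sub>R x \<in> zero_output_states A B C D Iu Oy k"
    unfolding zero_output_states_def by (intro CollectI exI[of _ "\<lambda>t. c *\<^sub>R v t"]) (simp add: sys_out_scaleR)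
qed

lemma zero_output_states_Suc_iff:
  "x \<in> zero_output_states A B C D Iu Oy (Suc k) \<longleftrightarrow>
    (\<exists>v0. (\<forall>i. i \<notin> Iu \<longrightarrow> v0 $ i = 0) \<and> (\<forall>i\<in>Oy. (C *v x + D *v v0) $ i = 0) \<and>
          A *v x + B *v v0 \<in> zero_output_states A B C D Iu Oy k)"
  (is "_ \<longleftrightarrow> ?step")
proof
  assume "x \<in> zero_output_states A B C D Iu Oy (Suc k)"
  then obtain v where v: "\<forall>t i. i \<notin> Iu \<longrightarrow> v t $ i = 0"
      "\<forall>t<Suc k. \<forall>i\<in>Oy. sys_out A B C D x v t $ i = 0"
    unfolding zero_output_states_def by blast
  have "A *v x + B *v v 0 \<in> zero_output_states A B C D Iu Oy k"
    unfolding zero_output_states_def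
  proof (rule CollectI, rule exI[of _ "\<lambda>j. v (Suc j)"], intro conjI allI impI ballI)
    fix t i assume "t < k" "i \<in> Oy"
    then have "sys_out A B C D x v (Suc t) $ i = 0" using v by auto
    then show "sys_out A B C D (A *v x + B *v v 0) (\<lambda>j. v (Suc j)) t $ i = 0"
      by (simp only: sys_out_Suc_shift)
  qed (use v in auto)
  moreover have "\<forall>i\<in>Oy. (C *v x + D *v v 0) $ i = 0"
    using v(2)[rule_format, of 0] by (simp add: sys_out_def)
  ultimately show ?step
    using v by blast
next
  assume ?step
  then obtain v0 v where v0: "\<forall>i. i \<notin> Iu \<longrightarrow> v0 $ i = 0" "\<forall>i\<in>Oy. (C *v x + D *v v0) $ i = 0"
    and v: "\<forall>t i. i \<notin> Iu \<longrightarrow> v t $ i = 0"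
      "\<forall>t<k. \<forall>i\<in>Oy. sys_out A B C D (A *v x + B *v v0) v t $ i = 0"
    unfolding zero_output_states_def by blast
  show "x \<in> zero_output_states A B C D Iu Oy (Suc k)"
    unfolding zero_output_states_def
  proof (rule CollectI, rule exI[of _ "case_nat v0 v"], intro conjI allI impI ballI)
    fix t i assume "i \<notin> Iu" then show "case_nat v0 v t $ i = 0" using v0 v by (cases t) auto
  next
    fix t i assume t: "t < Suc k" and i: "i \<in> Oy"
    show "sys_out A B C D x (case_nat v0 v) t $ i = 0"
    proof (cases t)
      case 0 then show ?thesis using v0 i by (simp add: sys_out_def)
    next
      case (Suc t')
      then show ?thesis using v(2) t i
        by (simp only: sys_out_Suc_shift) simp
    qed
  qed
qed

lemma zero_output_states_Suc_subset:
  "zero_output_states A B C D Iu Oy (Suc k) \<subseteq> zero_output_states A B C D Iu Oy k"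
  unfolding zero_output_states_def by (clarsimp, metis less_SucI)

lemma zero_output_states_stationary:
  assumes "zero_output_states A B C D Iu Oy (Suc j) = zero_output_states A B C D Iu Oy j" and "j \<le> k"
  shows "zero_output_states A B C D Iu Oy k = zero_output_states A B C D Iu Oy j"
  using assms(2)
proof (induct k rule: dec_induct)
  case (step k)
  have "zero_output_states A B C D Iu Oy (Suc k) = zero_output_states A B C D Iu Oy (Suc j)"
    by (rule set_eqI) (simp only: zero_output_states_Suc_iff step.hyps(3))
  then show ?case using assms(1) by simp
qed simp

text \<open>Each strict step of the decreasing chain lowers the dimension, so at most n of them occur.\<close>
lemma zero_output_states_stationary_or_dim:
  fixes A :: "real^'n^'n"
  shows "(\<exists>j<k. zero_output_states A B C D Iu Oy (Suc j) = zero_output_states A B C D Iu Oy j) \<or>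
         dim (zero_output_states A B C D Iu Oy k) + k \<le> CARD('n)"
proof (induct k)
  case 0 then show ?case using dim_subset_UNIV_cart by auto
next
  case (Suc k)
  show ?case
  proof (cases "zero_output_states A B C D Iu Oy (Suc k) = zero_output_states A B C D Iu Oy k")
    case False
    then have "span (zero_output_states A B C D Iu Oy (Suc k)) \<subset> span (zero_output_states A B C D Iu Oy k)"
      using zero_output_states_Suc_subset[of A B C D Iu Oy k]
      by (simp add: span_eq_iff[THEN iffD2, OF subspace_zero_output_states] psubset_eq)
    then have "dim (zero_output_states A B C D Iu Oy (Suc k)) < dim (zero_output_states A B C D Iu Oy k)"
      by (rule dim_psubset)
    then show ?thesis using Suc by (auto simp: less_Suc_eq)
  qed auto
qed

lemma zero_output_states_Suc_CARD:
  fixes A :: "real^'n^'n"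
  shows "zero_output_states A B C D Iu Oy (Suc CARD('n)) = zero_output_states A B C D Iu Oy CARD('n)"
proof -
  obtain j where j: "j < Suc CARD('n)"
    and stat: "zero_output_states A B C D Iu Oy (Suc j) = zero_output_states A B C D Iu Oy j"
    using zero_output_states_stationary_or_dim[of "Suc CARD('n)" A B C D Iu Oy] by auto
  then show ?thesis
    using zero_output_states_stationary[OF stat, of "Suc CARD('n)"]
      zero_output_states_stationary[OF stat, of "CARD('n)"] by simp
qed

lemma zero_output_input_if_invariant:
  assumes step: "\<And>y. y \<in> W \<Longrightarrow> \<exists>v0. (\<forall>i. i \<notin> Iu \<longrightarrow> v0 $ i = 0) \<and>
      (\<forall>i\<in>Oy. (C *v y + D *v v0) $ i = 0) \<and> A *v y + B *v v0 \<in> W"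
    and "x \<in> W"
  shows "\<exists>v. (\<forall>t i. i \<notin> Iu \<longrightarrow> v t $ i = 0) \<and> (\<forall>t. \<forall>i\<in>Oy. sys_out A B C D x v t $ i = 0)"
proof -
  define good where "good y v0 \<longleftrightarrow> (\<forall>i. i \<notin> Iu \<longrightarrow> v0 $ i = 0) \<and>
      (\<forall>i\<in>Oy. (C *v y + D *v v0) $ i = 0) \<and> A *v y + B *v v0 \<in> W" for y v0
  define pick where "pick y = (SOME v0. good y v0)" for y
  have pick: "good y (pick y)" if "y \<in> W" for y
    unfolding pick_def by (rule someI_ex) (use step[OF that] in \<open>simp add: good_def\<close>)
  define st where "st = rec_nat x (\<lambda>_ y. A *v y + B *v pick y)"
  have st_simps: "st 0 = x" "st (Suc t) = A *v st t + B *v pick (st t)" for t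
    unfolding st_def by simp_all
  have st_in: "st t \<in> W" for t
  proof (induct t)
    case (Suc t)
    then show ?case using pick[of "st t"] by (simp add: st_simps good_def)
  qed (simp add: st_simps \<open>x \<in> W\<close>)
  define v where "v t = pick (st t)" for t
  have traj_v: "traj A B x v t = st t" for t
    by (induct t) (simp_all add: st_simps v_def)
  show ?thesis
  proof (intro exI[of _ v] conjI allI impI ballI)
    fix t i assume "i \<notin> Iu"
    then show "v t $ i = 0" using pick[OF st_in[of t]] by (simp add: good_def v_def)
  next
    fix t i assume "i \<in> Oy"
    then show "sys_out A B C D x v t $ i = 0"
      using pick[OF st_in[of t]] by (simp add: good_def sys_out_def traj_v v_def)
  qed
qed

lemma zero_output_input_if_zero_output_states_CARD:
  fixes A :: "real^'n^'n"
  assumes "x \<in> zero_output_states A B C D Iu Oy CARD('n)"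
  shows "\<exists>v. (\<forall>t i. i \<notin> Iu \<longrightarrow> v t $ i = 0) \<and> (\<forall>t. \<forall>i\<in>Oy. sys_out A B C D x v t $ i = 0)"
proof (rule zero_output_input_if_invariant[OF _ assms])
  fix y assume "y \<in> zero_output_states A B C D Iu Oy CARD('n)"
  then have "y \<in> zero_output_states A B C D Iu Oy (Suc CARD('n))"
    by (simp only: zero_output_states_Suc_CARD)
  then show "\<exists>v0. (\<forall>i. i \<notin> Iu \<longrightarrow> v0 $ i = 0) \<and> (\<forall>i\<in>Oy. (C *v y + D *v v0) $ i = 0) \<and>
      A *v y + B *v v0 \<in> zero_output_states A B C D Iu Oy CARD('n)"
    by (simp only: zero_output_states_Suc_iff)
qed

lemma strongly_observable_subD_horizon:
  fixes A :: "real^'n^'n"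
  assumes "strongly_observable_sub A B C D Iu Oy"
    and "\<forall>t i. i \<notin> Iu \<longrightarrow> v t $ i = 0"
    and "\<forall>t<CARD('n). \<forall>i\<in>Oy. sys_out A B C D x v t $ i = 0"
  shows "x = 0"
proof -
  have "x \<in> zero_output_states A B C D Iu Oy CARD('n)"
    using assms(2,3) unfolding zero_output_states_def by blast
  then show ?thesis
    using assms(1) zero_output_input_if_zero_output_states_CARD
    unfolding strongly_observable_sub_def by metis
qed

lemma card_le_double_split:
  assumes "finite G" "card G \<le> 2 * r"
  obtains G1 where "G1 \<subseteq> G" "card G1 \<le> r" "card (G - G1) \<le> r"
proof (cases "card G \<le> r")
  case True
  then show ?thesis using that[of G] by simp
next
  case False
  then obtain G1 where "G1 \<subseteq> G" "card G1 = r"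
    by (metis nat_le_linear obtain_subset_with_card_n)
  moreover have "card (G - G1) = card G - card G1"
    using \<open>G1 \<subseteq> G\<close> assms(1) by (metis card_Diff_subset finite_subset)
  ultimately show ?thesis using that assms(2) by simp
qed

lemma card_Compl_ge:
  "card (Gy :: 'p::finite set) \<ge> CARD('p) - s \<longleftrightarrow> card (- Gy) \<le> s"
  by (simp add: Compl_eq_Diff_UNIV card_Diff_subset) linarith

lemma state_reconstructible_imp_sparse_strongly_observable:
  fixes A :: "real^'n^'n" and B :: "real^'m^'n" and C :: "real^'n^'p" and D :: "real^'m^'p"
  assumes "state_reconstructible A B C D r s"
  shows "sparse_strongly_observable A B C D (2 * r) (2 * s)"
  unfolding sparse_strongly_observable_def strongly_observable_sub_def
proof (intro allI impI)
  fix Gu :: "'m set" and Gy :: "'p set" and x0 v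
  assume "card Gu \<le> 2 * r" and "CARD('p) - 2 * s \<le> card Gy"
    and v: "\<forall>t i. i \<notin> Gu \<longrightarrow> v t $ i = 0"
    and y: "\<forall>t. \<forall>i\<in>Gy. sys_out A B C D x0 v t $ i = 0"
  obtain G1 where G1: "G1 \<subseteq> Gu" "card G1 \<le> r" "card (Gu - G1) \<le> r"
    using card_le_double_split[OF finite \<open>card Gu \<le> 2 * r\<close>] by blast
  have "card (- Gy) \<le> 2 * s"
    using \<open>CARD('p) - 2 * s \<le> card Gy\<close> card_Compl_ge by blast
  then obtain H1 where H1: "H1 \<subseteq> - Gy" "card H1 \<le> s" "card (- Gy - H1) \<le> s"
    using card_le_double_split[OF finite] by blast
  define w where "w t = (\<chi> i. if i \<in> G1 then v t $ i else 0)" for t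
  define w' where "w' t = (\<chi> i. if i \<in> G1 then 0 else - (v t $ i))" for t
  define a where "a t = (\<chi> i. if i \<in> H1 then - (sys_out A B C D x0 v t $ i) else 0)" for t
  define a' where "a' t = (\<chi> i. if i \<in> H1 \<or> i \<in> Gy then 0 else sys_out A B C D x0 v t $ i)" for t
  have "admissible_attack r s w a"
    unfolding admissible_attack_def using G1 H1 by (intro exI[of _ G1] exI[of _ H1]) (simp add: w_def a_def)
  moreover have "admissible_attack r s w' a'"
    unfolding admissible_attack_def using G1 H1 v
    by (intro exI[of _ "Gu - G1"] exI[of _ "- Gy - H1"]) (simp add: w'_def a'_def)
  moreover have "observed_out A B C D x0 (\<lambda>_. 0) w a k = observed_out A B C D 0 (\<lambda>_. 0) w' a' k" for k
  proof -
    have "(\<lambda>k. (0 + w k) - (0 + w' k)) = v"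
      by (rule ext) (simp add: vec_eq_iff w_def w'_def)
    then have "sys_out A B C D x0 (\<lambda>k. 0 + w k) k = sys_out A B C D 0 (\<lambda>k. 0 + w' k) k + sys_out A B C D x0 v k"
      using sys_out_diff[of A B C D x0 0 "\<lambda>k. 0 + w k" "\<lambda>k. 0 + w' k" k] by (simp add: algebra_simps)
    then show ?thesis
      using y by (simp add: observed_out_def vec_eq_iff a_def a'_def)
  qed
  ultimately have "traj A B x0 (\<lambda>k. 0 + w k) 0 = traj A B 0 (\<lambda>k. 0 + w' k) 0"
    using assms unfolding state_reconstructible_def by blast
  then show "x0 = 0" by simp
qed

lemma sparse_strongly_observable_imp_state_reconstructible:
  fixes A :: "real^'n^'n" and B :: "real^'m^'n" and C :: "real^'n^'p" and D :: "real^'m^'p"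
  assumes "sparse_strongly_observable A B C D (2 * r) (2 * s)"
  shows "state_reconstructible A B C D r s"
  unfolding state_reconstructible_def
proof (intro exI[of _ "CARD('n)"] allI impI)
  fix u x0 w a x0' w' a' t
  assume "admissible_attack r s w a" "admissible_attack r s w' a'"
    and eq: "\<forall>k\<le>t + CARD('n). observed_out A B C D x0 u w a k = observed_out A B C D x0' u w' a' k"
  then obtain Gu Gyb Gu' Gyb' where G: "card (Gu::'m set) \<le> r" "card (Gyb::'p set) \<le> s"
      "\<forall>t i. i \<notin> Gu \<longrightarrow> w t $ i = 0" "\<forall>t i. i \<notin> Gyb \<longrightarrow> a t $ i = 0"
    and G': "card (Gu'::'m set) \<le> r" "card (Gyb'::'p set) \<le> s"
      "\<forall>t i. i \<notin> Gu' \<longrightarrow> w' t $ i = 0" "\<forall>t i. i \<notin> Gyb' \<longrightarrow> a' t $ i = 0"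
    unfolding admissible_attack_def by metis
  let ?Iu = "Gu \<union> Gu'" and ?Oy = "- (Gyb \<union> Gyb')"
  have "card ?Iu \<le> 2 * r" "card (Gyb \<union> Gyb') \<le> 2 * s"
    using card_Un_le[of Gu Gu'] card_Un_le[of Gyb Gyb'] G G' by simp_all
  then have observable: "strongly_observable_sub A B C D ?Iu ?Oy"
    using assms card_Compl_ge[of "2 * s" ?Oy] unfolding sparse_strongly_observable_def by simp
  define dv where "dv k = (u k + w k) - (u k + w' k)" for k
  have "\<forall>k i. i \<notin> ?Iu \<longrightarrow> dv (t + k) $ i = 0"
    using G(3) G'(3) by (simp add: dv_def)
  moreover have "\<forall>j<CARD('n). \<forall>i\<in>?Oy.
      sys_out A B C D (traj A B (x0 - x0') dv t) (\<lambda>j. dv (t + j)) j $ i = 0"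
  proof (intro allI impI ballI)
    fix j i assume "j < CARD('n)" "i \<in> ?Oy"
    then have "observed_out A B C D x0 u w a (t + j) $ i = observed_out A B C D x0' u w' a' (t + j) $ i"
      "a (t + j) $ i = 0" "a' (t + j) $ i = 0"
      using eq G(4) G'(4) by auto
    moreover have "sys_out A B C D (x0 - x0') dv k =
        sys_out A B C D x0 (\<lambda>k. u k + w k) k - sys_out A B C D x0' (\<lambda>k. u k + w' k) k" for k
      unfolding dv_def by (rule sys_out_diff)
    ultimately have "sys_out A B C D (x0 - x0') dv (t + j) $ i = 0"
      by (simp add: observed_out_def)
    then show "sys_out A B C D (traj A B (x0 - x0') dv t) (\<lambda>j. dv (t + j)) j $ i = 0"
      by (simp only: sys_out_shift)
  qed
  ultimately have "traj A B (x0 - x0') dv t = 0"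
    by (rule strongly_observable_subD_horizon[OF observable])
  moreover have "traj A B (x0 - x0') dv t = traj A B x0 (\<lambda>k. u k + w k) t - traj A B x0' (\<lambda>k. u k + w' k) t"
    unfolding dv_def by (rule traj_diff)
  ultimately show "traj A B x0 (\<lambda>k. u k + w k) t = traj A B x0' (\<lambda>k. u k + w' k) t"
    by simp
qed

theorem theorem1:
  fixes A :: "real^'n^'n" and B :: "real^'m^'n" and C :: "real^'n^'p" and D :: "real^'m^'p"
    and r s :: nat
  assumes full_col_rank: "\<And>v. B *v v = 0 \<Longrightarrow> D *v v = 0 \<Longrightarrow> v = 0"
  shows "state_reconstructible A B C D r s \<longleftrightarrow> sparse_strongly_observable A B C D (2 * r) (2 * s)"
  using state_reconstructible_imp_sparse_strongly_observable
    sparse_strongly_observable_imp_state_reconstructible by blast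

end
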